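(* Consider three agents $a,b,c$, each starting with an input value in $\{0,1\}$ (all $8$ input assignments are possible), communicating in the full-information iterated immediate snapshot model described in the context. For no number $R \ge 0$ of rounds does there exist a decision protocol solving the (0-)majority consensus task. That is, there is no family of functions $\delta_i$ ($i \in \{a,b,c\}$), mapping the possible final local states of agent $i$ after $R$ rounds to $\{0,1\}$, such that for every input assignment and every sequence of $R$ communication graphs from the immediate snapshot model, the output triple $(\delta_a(\ell_a),\delta_b(\ell_b),\delta_c(\ell_c))$ of the final local states satisfies both majority agreement and validity.
   Context: Agents: $\mathrm{Ag}=\{a,b,c\}$. A communication graph is a reflexive relation $G \subseteq \mathrm{Ag}\times\mathrm{Ag}$; write $j \to i$ for $(j,i)\in G$. Full-information dynamics: initially the local state of agent $i$ is its input value $x_i$. In a round with communication graph $G$, if the current local states are $(\ell_a,\ell_b,\ell_c)$, the new local state of agent $i$ is the tuple $(m_a,m_b,m_c)$ where $m_j=\ell_j$ if $j\to i$ in $G$ and $m_j=\bot$ (no message) otherwise. In each round a graph is chosen arbitrarily (independently of previous rounds) from the model's set of graphs. The immediate snapshot model is the set of $13$ graphs obtained as follows: for each ordered partition $(B_1,\dots,B_k)$ of $\mathrm{Ag}$ into nonempty blocks, $j\to i$ iff the block containing $j$ has index at most the index of the block containing $i$. Majority consensus task: each agent outputs a value in $\{0,1\}$ computed only from its final local state; (majority agreement) either all three outputs are equal, or a majority (at least two) of the outputs are $0$; (validity) every output value is one of the input values of the execution (in particular, if all inputs equal $v$ then all outputs equal $v$). *)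

theory Defs
  imports Main
begin

datatype agent = Ag_a | Ag_b | Ag_c

lemma UNIV_agent: "(UNIV :: agent set) = {Ag_a, Ag_b, Ag_c}"
  using agent.exhaust by blast

text \<open>Local states of the full-information protocol: either an initial input value
  (False = 0, True = 1) or a tuple of received messages, None meaning no message.\<close>
datatype lstate = Inp bool | Msgs "agent \<Rightarrow> lstate option"

type_synonym graph = "(agent \<times> agent) set"

text \<open>(j, i) \<in> G means j \<rightarrow> i.\<close>

definition ordered_partition :: "agent set list \<Rightarrow> bool" where
  "ordered_partition Bs \<longleftrightarrow>
     (\<forall>k < length Bs. Bs ! k \<noteq> {}) \<and>
     (\<forall>k < length Bs. \<forall>m < length Bs. k \<noteq> m \<longrightarrow> Bs ! k \<inter> Bs ! m = {}) \<and>
     (\<Union>(set Bs) = UNIV)"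

definition graph_of_partition :: "agent set list \<Rightarrow> graph" where
  "graph_of_partition Bs =
     {(j, i). \<exists>k < length Bs. \<exists>m < length Bs. j \<in> Bs ! k \<and> i \<in> Bs ! m \<and> k \<le> m}"

definition IS_graphs :: "graph set" where
  "IS_graphs = {graph_of_partition Bs | Bs. ordered_partition Bs}"

definition round_step :: "graph \<Rightarrow> (agent \<Rightarrow> lstate) \<Rightarrow> (agent \<Rightarrow> lstate)" where
  "round_step G l = (\<lambda>i. Msgs (\<lambda>j. if (j, i) \<in> G then Some (l j) else None))"

definition initial_state :: "(agent \<Rightarrow> bool) \<Rightarrow> (agent \<Rightarrow> lstate)" where
  "initial_state x = (\<lambda>i. Inp (x i))"

definition run :: "(agent \<Rightarrow> bool) \<Rightarrow> graph list \<Rightarrow> (agent \<Rightarrow> lstate)" where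
  "run x Gs = fold round_step Gs (initial_state x)"

definition majority_agreement :: "(agent \<Rightarrow> bool) \<Rightarrow> bool" where
  "majority_agreement y \<longleftrightarrow>
     (y Ag_a = y Ag_b \<and> y Ag_b = y Ag_c) \<or> card {i. y i = False} \<ge> 2"

definition validity :: "(agent \<Rightarrow> bool) \<Rightarrow> (agent \<Rightarrow> bool) \<Rightarrow> bool" where
  "validity x y \<longleftrightarrow> (\<forall>i. \<exists>j. y i = x j)"

definition solves_majority_consensus :: "nat \<Rightarrow> (agent \<Rightarrow> lstate \<Rightarrow> bool) \<Rightarrow> bool" where
  "solves_majority_consensus R \<delta> \<longleftrightarrow>
     (\<forall>x Gs. length Gs = R \<longrightarrow> set Gs \<subseteq> IS_graphs \<longrightarrow>
        (let l = run x Gs; y = (\<lambda>i. \<delta> i (l i)) in majority_agreement y \<and> validity x y))"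

end

theory Submission
  imports Defs
begin

(* Call two configurations reachable in R rounds indistinguishable if two agents have the same
   local state in both.  If a protocol outputs 1 at every agent of one configuration, then in an
   indistinguishable one two agents still output 1, and majority agreement forces the third to
   output 1 as well; so unanimous 1 propagates along chains of such configurations.  Running
   every round in the full graph, the runs from inputs 111 and 000 are joined by a chain: with no
   rounds, flip the inputs one at a time; and if i and j cannot distinguish two configurations,
   their full-graph successors are joined through the immediate snapshot rounds [{i},{j,k}],
   [{i},{j},{k}], [{i,j},{k}], in the last of which i and j hear only each other.  Validity,
   however, demands output 1 on input 111 and output 0 on input 000. *)

lemma UNIV_agent_three:
  assumes "i \<noteq> j" "j \<noteq> k" "i \<noteq> k"
  shows "(UNIV :: agent set) = {i, j, k}"
  using assms by (cases i; cases j; cases k; auto simp: UNIV_agent)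

lemma ex_third_agent: "(i :: agent) \<noteq> j \<Longrightarrow> \<exists>k. k \<noteq> i \<and> k \<noteq> j"
  by (cases i; cases j; auto intro: agent.exhaust)

lemma majority_agreement_two_True:
  assumes "majority_agreement y" "i \<noteq> j" "y i" "y j"
  shows "y k"
proof -
  have "{k. y k = False} \<subseteq> UNIV - {i, j}"
    using assms(3,4) by auto
  moreover have "card (UNIV - {i, j} :: agent set) = 1"
    using assms(2) by (cases i; cases j; simp add: UNIV_agent)
  ultimately have "card {k. y k = False} \<le> 1"
    by (metis card_mono finite.emptyI finite_Diff2 finite_insert UNIV_agent)
  then have "y Ag_a = y Ag_b \<and> y Ag_b = y Ag_c"
    using assms(1) unfolding majority_agreement_def by linarith
  then show ?thesis
    using assms(3) by (metis agent.exhaust)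
qed

lemma validity_constant_inputs: "validity (\<lambda>_. b) y \<Longrightarrow> y i = b"
  by (simp add: validity_def)

lemma graph_of_partition_in_IS_graphs:
  "ordered_partition Bs \<Longrightarrow> graph_of_partition Bs \<in> IS_graphs"
  unfolding IS_graphs_def by blast

lemma ordered_partitions_of_three:
  assumes "i \<noteq> j" "j \<noteq> k" "i \<noteq> k"
  shows "ordered_partition [{i}, {j, k}]" "ordered_partition [{i}, {j}, {k}]"
    "ordered_partition [{i, j}, {k}]"
  unfolding ordered_partition_def UNIV_agent_three[OF assms]
  using assms by (auto simp: less_Suc_eq numeral_2_eq_2 numeral_3_eq_3)

lemma in_neighbours_graph_of_partition:
  assumes "ordered_partition Bs" "m < length Bs" "v \<in> Bs ! m"
  shows "{u. (u, v) \<in> graph_of_partition Bs} = (\<Union>k\<le>m. Bs ! k)"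
proof -
  have block_unique: "m' = m" if "m' < length Bs" "v \<in> Bs ! m'" for m'
    using assms that unfolding ordered_partition_def by blast
  have "(u, v) \<in> graph_of_partition Bs \<longleftrightarrow> (\<exists>k \<le> m. u \<in> Bs ! k)" for u
  proof
    assume "(u, v) \<in> graph_of_partition Bs"
    then obtain k m' where "m' < length Bs" "u \<in> Bs ! k" "v \<in> Bs ! m'" "k \<le> m'"
      unfolding graph_of_partition_def by blast
    then show "\<exists>k \<le> m. u \<in> Bs ! k"
      using block_unique by blast
  next
    assume "\<exists>k \<le> m. u \<in> Bs ! k"
    then obtain k where "k \<le> m" "u \<in> Bs ! k" by blast
    then show "(u, v) \<in> graph_of_partition Bs"
      using assms(2,3) unfolding graph_of_partition_def by (blast intro: le_less_trans)
  qed
  then show ?thesis by blast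
qed

definition full_graph :: graph where
  "full_graph = graph_of_partition [UNIV]"

lemma full_graph_in_IS_graphs: "full_graph \<in> IS_graphs"
  unfolding full_graph_def
  by (rule graph_of_partition_in_IS_graphs) (simp add: ordered_partition_def)

lemma in_neighbours_full_graph: "{u. (u, v) \<in> full_graph} = UNIV"
  by (simp add: full_graph_def graph_of_partition_def)

definition reachable :: "nat \<Rightarrow> (agent \<Rightarrow> lstate) set" where
  "reachable R = {run x Gs | x Gs. length Gs = R \<and> set Gs \<subseteq> IS_graphs}"

lemma initial_state_reachable: "initial_state x \<in> reachable 0"
  unfolding reachable_def run_def by force

lemma round_step_reachable:
  assumes "L \<in> reachable R" "G \<in> IS_graphs"
  shows "round_step G L \<in> reachable (Suc R)"
proof -
  obtain x Gs where "L = run x Gs" "length Gs = R" "set Gs \<subseteq> IS_graphs"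
    using assms(1) unfolding reachable_def by blast
  then have "round_step G L = run x (Gs @ [G])" "length (Gs @ [G]) = Suc R"
    "set (Gs @ [G]) \<subseteq> IS_graphs"
    using assms(2) by (simp_all add: run_def)
  then show ?thesis
    unfolding reachable_def by blast
qed

lemma run_replicate_Suc: "run x (replicate (Suc R) G) = round_step G (run x (replicate R G))"
  by (simp add: run_def replicate_append_same[symmetric])

definition indist :: "nat \<Rightarrow> (agent \<Rightarrow> lstate) \<Rightarrow> (agent \<Rightarrow> lstate) \<Rightarrow> bool" where
  "indist R L L' \<longleftrightarrow>
     L \<in> reachable R \<and> L' \<in> reachable R \<and> (\<exists>i j. i \<noteq> j \<and> L i = L' i \<and> L j = L' j)"

lemma symp_indist: "symp (indist R)"
  unfolding symp_def indist_def by metis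

lemma indist_initial_state_upd: "indist 0 (initial_state x) (initial_state (x(i := b)))"
proof -
  obtain j where "j \<noteq> i"
    using agent.distinct(1) by metis
  then obtain k where "k \<noteq> j" "k \<noteq> i"
    using ex_third_agent by metis
  then show ?thesis
    unfolding indist_def using \<open>j \<noteq> i\<close> initial_state_reachable
    by (auto simp: initial_state_def)
qed

lemma indist_initial_states: "(indist 0)\<^sup>*\<^sup>* (initial_state x) (initial_state x')"
proof -
  define x1 where "x1 = x(Ag_a := x' Ag_a)"
  define x2 where "x2 = x1(Ag_b := x' Ag_b)"
  have "x2(Ag_c := x' Ag_c) = x'"
  proof
    fix i
    show "(x2(Ag_c := x' Ag_c)) i = x' i"
      unfolding x1_def x2_def by (cases i) simp_all
  qed
  then have "indist 0 (initial_state x2) (initial_state x')"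
    using indist_initial_state_upd[of x2 Ag_c "x' Ag_c"] by simp
  moreover have "indist 0 (initial_state x) (initial_state x1)"
    "indist 0 (initial_state x1) (initial_state x2)"
    unfolding x1_def x2_def by (rule indist_initial_state_upd)+
  ultimately show ?thesis
    by (meson converse_rtranclp_into_rtranclp r_into_rtranclp)
qed

lemma indist_round_stepI:
  assumes "L \<in> reachable R" "L' \<in> reachable R" "G \<in> IS_graphs" "G' \<in> IS_graphs" "i \<noteq> j"
    and "{u. (u, i) \<in> G} = {u. (u, i) \<in> G'}" "{u. (u, j) \<in> G} = {u. (u, j) \<in> G'}"
    and "\<And>u. (u, i) \<in> G \<or> (u, j) \<in> G \<Longrightarrow> L u = L' u"
  shows "indist (Suc R) (round_step G L) (round_step G' L')"
proof -
  have "round_step G L v = round_step G' L' v" if "v \<in> {i, j}" for v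
    using that assms(6-8) unfolding round_step_def by (fastforce simp: set_eq_iff)
  then show ?thesis
    unfolding indist_def using assms(1-5) round_step_reachable by blast
qed

lemma indist_full_graph_two_blocks:
  assumes "L \<in> reachable R" "i \<noteq> j" "j \<noteq> k" "i \<noteq> k"
  shows "(indist (Suc R))\<^sup>*\<^sup>* (round_step full_graph L)
           (round_step (graph_of_partition [{i, j}, {k}]) L)"
proof -
  define G1 where "G1 = graph_of_partition [{i}, {j, k}]"
  define G2 where "G2 = graph_of_partition [{i}, {j}, {k}]"
  define G3 where "G3 = graph_of_partition [{i, j}, {k}]"
  note partitions = ordered_partitions_of_three[OF assms(2-4)]
  note UNIV_eq = UNIV_agent_three[OF assms(2-4)]
  have IS: "G1 \<in> IS_graphs" "G2 \<in> IS_graphs" "G3 \<in> IS_graphs"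
    unfolding G1_def G2_def G3_def using partitions by (simp_all add: graph_of_partition_in_IS_graphs)
  have G1: "{u. (u, i) \<in> G1} = {i}" "{u. (u, j) \<in> G1} = UNIV" "{u. (u, k) \<in> G1} = UNIV"
    unfolding G1_def
    using in_neighbours_graph_of_partition[OF partitions(1), where m=0 and v=i]
      in_neighbours_graph_of_partition[OF partitions(1), where m="Suc 0" and v=j]
      in_neighbours_graph_of_partition[OF partitions(1), where m="Suc 0" and v=k]
    by (simp_all add: atMost_Suc UNIV_eq)
  have G2: "{u. (u, i) \<in> G2} = {i}" "{u. (u, j) \<in> G2} = {i, j}" "{u. (u, k) \<in> G2} = UNIV"
    unfolding G2_def
    using in_neighbours_graph_of_partition[OF partitions(2), where m=0 and v=i]
      in_neighbours_graph_of_partition[OF partitions(2), where m="Suc 0" and v=j]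
      in_neighbours_graph_of_partition[OF partitions(2), where m="Suc (Suc 0)" and v=k]
    by (simp_all add: atMost_Suc UNIV_eq insert_commute)
  have G3: "{u. (u, j) \<in> G3} = {i, j}" "{u. (u, k) \<in> G3} = UNIV"
    unfolding G3_def
    using in_neighbours_graph_of_partition[OF partitions(3), where m=0 and v=j]
      in_neighbours_graph_of_partition[OF partitions(3), where m="Suc 0" and v=k]
    by (simp_all add: atMost_Suc UNIV_eq)
  have "indist (Suc R) (round_step full_graph L) (round_step G1 L)"
    using indist_round_stepI[OF assms(1,1) full_graph_in_IS_graphs IS(1) assms(3)]
    by (simp add: G1 in_neighbours_full_graph)
  moreover have "indist (Suc R) (round_step G1 L) (round_step G2 L)"
    using indist_round_stepI[OF assms(1,1) IS(1,2) assms(4)] by (simp add: G1 G2)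
  moreover have "indist (Suc R) (round_step G2 L) (round_step G3 L)"
    using indist_round_stepI[OF assms(1,1) IS(2,3) assms(3)] by (simp add: G2 G3)
  ultimately show ?thesis
    unfolding G3_def by (meson converse_rtranclp_into_rtranclp r_into_rtranclp)
qed

lemma indist_round_step_full_graph:
  assumes "indist R L L'"
  shows "(indist (Suc R))\<^sup>*\<^sup>* (round_step full_graph L) (round_step full_graph L')"
proof -
  obtain i j where ij: "i \<noteq> j" "L i = L' i" "L j = L' j"
    and reachable: "L \<in> reachable R" "L' \<in> reachable R"
    using assms unfolding indist_def by blast
  obtain k where k: "j \<noteq> k" "i \<noteq> k"
    using ex_third_agent[OF ij(1)] by metis
  define G where "G = graph_of_partition [{i, j}, {k}]"
  have partition: "ordered_partition [{i, j}, {k}]"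
    using ordered_partitions_of_three(3)[OF ij(1) k] .
  then have G: "G \<in> IS_graphs" "{u. (u, i) \<in> G} = {i, j}" "{u. (u, j) \<in> G} = {i, j}"
    unfolding G_def
    using graph_of_partition_in_IS_graphs
      in_neighbours_graph_of_partition[OF partition, where m=0 and v=i]
      in_neighbours_graph_of_partition[OF partition, where m=0 and v=j]
    by auto
  have "(indist (Suc R))\<^sup>*\<^sup>* (round_step full_graph L) (round_step G L)"
    unfolding G_def using indist_full_graph_two_blocks[OF reachable(1) ij(1) k] .
  moreover have "indist (Suc R) (round_step G L) (round_step G L')"
    by (rule indist_round_stepI[OF reachable G(1,1) ij(1)])
      (use G(2,3) ij(2,3) in \<open>auto simp: set_eq_iff\<close>)
  moreover have "(indist (Suc R))\<^sup>*\<^sup>* (round_step G L') (round_step full_graph L')"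
    unfolding G_def using indist_full_graph_two_blocks[OF reachable(2) ij(1) k]
    by (rule sympD[OF symp_rtranclp[OF symp_indist]])
  ultimately show ?thesis
    by (meson rtranclp.rtrancl_into_rtrancl rtranclp_trans)
qed

lemma rtranclp_indist_round_step_full_graph:
  assumes "(indist R)\<^sup>*\<^sup>* L L'"
  shows "(indist (Suc R))\<^sup>*\<^sup>* (round_step full_graph L) (round_step full_graph L')"
  using assms
proof (induction rule: rtranclp_induct)
  case base
  then show ?case by simp
next
  case (step L' L'')
  from step.IH indist_round_step_full_graph[OF step.hyps(2)] show ?case
    by (rule rtranclp_trans)
qed

lemma indist_runs_full_graph:
  "(indist R)\<^sup>*\<^sup>* (run x (replicate R full_graph)) (run x' (replicate R full_graph))"
proof (induction R)
  case 0
  then show ?case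
    using indist_initial_states by (simp add: run_def)
next
  case (Suc R)
  then show ?case
    unfolding run_replicate_Suc by (rule rtranclp_indist_round_step_full_graph)
qed

lemma majority_agreement_reachable:
  assumes "solves_majority_consensus R \<delta>" "L \<in> reachable R"
  shows "majority_agreement (\<lambda>i. \<delta> i (L i))"
  using assms unfolding solves_majority_consensus_def reachable_def by (auto simp: Let_def)

lemma indist_preserves_unanimous_True:
  assumes "solves_majority_consensus R \<delta>" "(indist R)\<^sup>*\<^sup>* L L'" "\<forall>i. \<delta> i (L i)"
  shows "\<forall>i. \<delta> i (L' i)"
  using assms(2)
proof (induction rule: rtranclp_induct)
  case base
  from assms(3) show ?case .
next
  case (step L' L'')
  then obtain i j where ij: "i \<noteq> j" "L' i = L'' i" "L' j = L'' j" and "L'' \<in> reachable R"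
    unfolding indist_def by blast
  then have "majority_agreement (\<lambda>i. \<delta> i (L'' i))"
    using majority_agreement_reachable[OF assms(1)] by blast
  moreover have "\<delta> i (L'' i)" "\<delta> j (L'' j)"
    using step.IH ij(2,3) by metis+
  ultimately show ?case
    using majority_agreement_two_True[OF _ ij(1)] by blast
qed

theorem mainTheorem1:
  fixes R :: nat
  shows "\<not> (\<exists>\<delta> :: agent \<Rightarrow> lstate \<Rightarrow> bool. solves_majority_consensus R \<delta>)"
proof
  assume "\<exists>\<delta> :: agent \<Rightarrow> lstate \<Rightarrow> bool. solves_majority_consensus R \<delta>"
  then obtain \<delta> :: "agent \<Rightarrow> lstate \<Rightarrow> bool" where sol: "solves_majority_consensus R \<delta>"
    by blast
  define L where "L b = run (\<lambda>_. b) (replicate R full_graph)" for b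
  have "set (replicate R full_graph) \<subseteq> IS_graphs"
    using full_graph_in_IS_graphs by (metis in_set_replicate subsetI)
  then have "validity (\<lambda>_. b) (\<lambda>i. \<delta> i (L b i))" for b
    using sol unfolding solves_majority_consensus_def L_def Let_def by simp
  then have unanimous: "\<delta> i (L b i) = b" for b i
    by (rule validity_constant_inputs)
  have "\<forall>i. \<delta> i (L True i)"
    using unanimous by simp
  then have "\<forall>i. \<delta> i (L False i)"
    unfolding L_def by (rule indist_preserves_unanimous_True[OF sol indist_runs_full_graph])
  then show False
    using unanimous[of _ False] by simp
qed

end
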